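(* Let $\mathcal G=\mathcal G_4$ and consider the edge reinforced random walk on $\mathcal G_4$ with weight function $W:\mathbb N\to(0,\infty)$ satisfying $\sum_{k\in\mathbb N}\frac1{W(k)}<\infty$, arbitrary initial edge weights $X_0^e\in\mathbb N$ and arbitrary starting vertex. Then $\mathbb P(\text{all four edges of }\mathcal G_4\text{ are traversed infinitely often})=0.$
   Context: $\mathbb N=\{0,1,2,\ldots\}$. For $l\ge 3$, the cycle $\mathcal G_l$ has vertices $\{0,1,\ldots,l-1\}$ and edges $e_i=\{i,i+1\}$, $i=0,\ldots,l-1$, with addition modulo $l$. Edge reinforced random walk (ERRW) on a connected graph $\mathcal G$ of bounded degree: given a weight function $W:\mathbb N\to(0,\infty)$, initial edge weights $X_0^e\in\mathbb N$ with $\sup_e X_0^e<\infty$, and a starting vertex $I_0=v_0$, the process $(I_n)_{n\ge0}$ with natural filtration $(\mathcal F_n)$ jumps at each step to a neighbour of its current vertex with $\mathbb P(I_{n+1}=v'\mid\mathcal F_n)1_{\{I_n=v\}}=\frac{W(X_n^{\{v,v'\}})}{\sum_{w\sim v}W(X_n^{\{v,w\}})}1_{\{I_n=v\sim v'\}}$, where $X_n^e=X_0^e+\sum_{k=0}^{n-1}1_{\{\{I_k,I_{k+1}\}=e\}}$. *)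

theory Defs
  imports "HOL-Probability.Probability"
begin

definition cyc_edge :: "nat \<Rightarrow> nat set" where
  "cyc_edge i = {i, (i + 1) mod 4}"

definition cyc_adj :: "nat \<Rightarrow> nat \<Rightarrow> bool" where
  "cyc_adj u v \<longleftrightarrow> (\<exists>i<4. {u, v} = cyc_edge i)"

text \<open>Weight of edge e after the walk has followed the finite path p (list of
  visited vertices): initial weight plus number of traversals so far.\<close>

definition ecount :: "(nat \<Rightarrow> nat) \<Rightarrow> nat list \<Rightarrow> nat \<Rightarrow> nat" where
  "ecount X0 p i = X0 i + card {k. Suc k < length p \<and> {p ! k, p ! Suc k} = cyc_edge i}"

definition edge_idx :: "nat \<Rightarrow> nat \<Rightarrow> nat" where
  "edge_idx u v = (THE i. i < 4 \<and> {u, v} = cyc_edge i)"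

definition errw_step :: "(nat \<Rightarrow> real) \<Rightarrow> (nat \<Rightarrow> nat) \<Rightarrow> nat list \<Rightarrow> nat \<Rightarrow> real" where
  "errw_step W X0 p v =
     (if cyc_adj (last p) v then
        W (ecount X0 p (edge_idx (last p) v)) /
        (\<Sum>w\<in>{w. w < 4 \<and> cyc_adj (last p) w}. W (ecount X0 p (edge_idx (last p) w)))
      else 0)"

definition errw_path_prob :: "(nat \<Rightarrow> real) \<Rightarrow> (nat \<Rightarrow> nat) \<Rightarrow> nat \<Rightarrow> nat list \<Rightarrow> real" where
  "errw_path_prob W X0 v0 p =
     (if p ! 0 = v0 then 1 else 0) *
     (\<Prod>k<length p - 1. errw_step W X0 (take (Suc k) p) (p ! Suc k))"

end

theory Submission
  imports Defs
begin

text \<open>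
  The edges \<open>e_u\<close> and \<open>e_(u-1)\<close> leaving a vertex \<open>u\<close> have opposite
  parity.  Give edge \<open>e\<close> the sign \<open>\<plusminus>1\<close> according to its parity and, for a real
  parameter \<open>\<theta>\<close>, multiply by \<open>1 - i \<theta> sign(e) / W(k)\<close> whenever the walk crosses \<open>e\<close>
  while its weight is \<open>k\<close>.  The resulting product \<open>M_n(\<theta>)\<close> is a complex martingale:
  the two possible factors, weighted by the transition probabilities \<open>A/(A+B)\<close> and
  \<open>B/(A+B)\<close>, average to 1.  Its modulus is bounded by that of the infinite product
  \<open>G(\<theta>)\<close>, to which it converges on the event \<open>R\<close> that all edges are crossed
  infinitely often.  Approximating \<open>R\<close> by an event determined by the first \<open>m\<close> steps,
  the martingale property gives \<open>P(R) \<le> E[1_R |M_m(\<theta>)| / |G(\<theta>)|] + 2\<delta>\<close>, and the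
  integrand is at most \<open>W(X_m(e_0)) / \<theta>\<close>, so letting \<open>\<theta> \<rightarrow> \<infinity>\<close> gives \<open>P(R) \<le> 2\<delta>\<close>.
\<close>

section \<open>The cycle \<open>G_4\<close>\<close>

lemma cyc_edge_simps:
  "cyc_edge 0 = {0,1}" "cyc_edge (Suc 0) = {1,2}" "cyc_edge 1 = {1,2}"
  "cyc_edge 2 = {2,3}" "cyc_edge 3 = {3,0}"
  by (auto simp: cyc_edge_def)

lemma ex_less_4: "(\<exists>i<(4::nat). P i) \<longleftrightarrow> P 0 \<or> P 1 \<or> P 2 \<or> P 3"
  by (auto simp: less_Suc_eq numeral_eq_Suc)

text \<open>Edge indices are unique: \<open>cyc_edge\<close> is injective on all of \<open>\<nat>\<close> as long as
  one of the two indices is a genuine edge index (the other one then lies in that edge).\<close>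

lemma cyc_edge_inj: "\<lbrakk>j < 4; cyc_edge i = cyc_edge j\<rbrakk> \<Longrightarrow> i = j"
proof -
  assume j: "j < 4" and eq: "cyc_edge i = cyc_edge j"
  have "i \<in> cyc_edge j" unfolding eq[symmetric] by (simp add: cyc_edge_def)
  then have "i < 4" using j by (auto simp: cyc_edge_def)
  then have "i \<in> {0,1,2,3}" "j \<in> {0,1,2,3}" using j by auto
  then show "i = j" using eq by (auto simp: cyc_edge_simps doubleton_eq_iff)
qed

lemma edge_idx_eq: "\<lbrakk>i < 4; {u,v} = cyc_edge i\<rbrakk> \<Longrightarrow> edge_idx u v = i"
  unfolding edge_idx_def by (rule the_equality) (auto intro: cyc_edge_inj)

lemma cyc_adj_iff: "cyc_adj u w \<longleftrightarrow> u < 4 \<and> (w = (u+1) mod 4 \<or> w = (u+3) mod 4)"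
proof (cases "u < 4")
  case True
  then consider "u = 0" | "u = 1" | "u = 2" | "u = 3" by linarith
  then show ?thesis
    by cases (auto simp: cyc_adj_def ex_less_4 cyc_edge_simps doubleton_eq_iff)
qed (auto simp: cyc_adj_def ex_less_4 cyc_edge_simps doubleton_eq_iff)

lemma edge_idx_succ: "u < 4 \<Longrightarrow> edge_idx u ((u+1) mod 4) = u"
  by (rule edge_idx_eq) (auto simp: cyc_edge_def)

lemma edge_idx_pred: "u < 4 \<Longrightarrow> edge_idx u ((u+3) mod 4) = (u+3) mod 4"
proof (rule edge_idx_eq)
  assume "u < 4"
  then have "((u+3) mod 4 + 1) mod 4 = u" by presburger
  then show "{u, (u+3) mod 4} = cyc_edge ((u+3) mod 4)" by (auto simp: cyc_edge_def)
qed simp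

lemma adj_edge_idx:
  assumes "cyc_adj u v"
  shows "edge_idx u v < 4" and "{u,v} = cyc_edge (edge_idx u v)"
proof -
  obtain i where "i < 4" "{u,v} = cyc_edge i" using assms unfolding cyc_adj_def by auto
  then show "edge_idx u v < 4" "{u,v} = cyc_edge (edge_idx u v)" using edge_idx_eq by auto
qed


section \<open>Edge counts and path probabilities\<close>

lemma transitions_snoc:
  assumes "q \<noteq> []"
  shows "{k. Suc k < length (q@[v]) \<and> {(q@[v]) ! k, (q@[v]) ! Suc k} = E}
       = {k. Suc k < length q \<and> {q ! k, q ! Suc k} = E} \<union> {k. k = length q - 1 \<and> {last q, v} = E}"
    (is "?L = ?S \<union> ?T")
proof (intro set_eqI iffI)
  have lastq: "last q = q ! (length q - 1)" using assms by (simp add: last_conv_nth)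
  have nth_q: "(q@[v]) ! k = q ! k" if "k < length q" for k using that by (simp add: nth_append)
  fix k
  {
    assume "k \<in> ?L"
    then have k: "Suc k < Suc (length q)" "{(q@[v]) ! k, (q@[v]) ! Suc k} = E" by auto
    show "k \<in> ?S \<union> ?T"
    proof (cases "Suc k < length q")
      case True then show ?thesis using k nth_q[of k] nth_q[of "Suc k"] by simp
    next
      case False
      then have "k = length q - 1" "Suc k = length q" using k by auto
      then show ?thesis using k nth_q[of k] lastq by simp
    qed
  next
    assume "k \<in> ?S \<union> ?T"
    then show "k \<in> ?L"
    proof
      assume "k \<in> ?S" then show ?thesis using nth_q[of k] nth_q[of "Suc k"] by simp
    next
      assume kT: "k \<in> ?T"
      then have "k = length q - 1" "Suc k = length q" using assms by auto
      then show ?thesis using kT nth_q[of k] lastq by simp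
    qed
  }
qed

lemma ecount_snoc:
  assumes "q \<noteq> []"
  shows "ecount X0 (q @ [v]) i = ecount X0 q i + (if {last q, v} = cyc_edge i then 1 else 0)"
proof -
  define S where "S = {k. Suc k < length q \<and> {q ! k, q ! Suc k} = cyc_edge i}"
  define T where "T = {k. k = length q - 1 \<and> {last q, v} = cyc_edge i}"
  have "finite S" by (rule finite_subset[of _ "{..<length q}"]) (auto simp: S_def)
  moreover have "finite T" by (simp add: T_def)
  moreover have "S \<inter> T = {}" by (auto simp: S_def T_def)
  ultimately have "card (S \<union> T) = card S + card T" by (rule card_Un_disjoint)
  also have "card T = (if {last q, v} = cyc_edge i then 1 else 0)" by (simp add: T_def)
  finally show ?thesis
    unfolding ecount_def transitions_snoc[OF assms] S_def[symmetric] T_def[symmetric] by simp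
qed

lemma ecount_ge: "X0 i \<le> ecount X0 p i"
  by (simp add: ecount_def)

lemma path_prob_snoc:
  assumes "q \<noteq> []"
  shows "errw_path_prob W X0 v0 (q @ [v]) = errw_path_prob W X0 v0 q * errw_step W X0 q v"
proof -
  obtain n where n: "length q = Suc n" using assms by (cases q) auto
  have "(\<Prod>k<n. errw_step W X0 (take (Suc k) (q@[v])) ((q@[v]) ! Suc k))
      = (\<Prod>k<n. errw_step W X0 (take (Suc k) q) (q ! Suc k))"
    by (rule prod.cong) (auto simp: n nth_append)
  moreover have "take (Suc n) (q@[v]) = q" "(q@[v]) ! Suc n = v" "(q@[v]) ! 0 = q ! 0"
    using n assms by (auto simp: nth_append)
  ultimately show ?thesis unfolding errw_path_prob_def by (simp add: n prod.lessThan_Suc)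
qed

lemma errw_step_average:
  fixes F :: "nat \<Rightarrow> 'b::real_vector" and W :: "nat \<Rightarrow> real" and X0 q
  assumes u: "last q < 4"
  defines "A \<equiv> W (ecount X0 q (last q))" and "B \<equiv> W (ecount X0 q ((last q + 3) mod 4))"
  shows "(\<Sum>v<4. errw_step W X0 q v *\<^sub>R F v)
       = (A / (A + B)) *\<^sub>R F ((last q + 1) mod 4) + (B / (A + B)) *\<^sub>R F ((last q + 3) mod 4)"
proof -
  define a where "a = (last q + 1) mod 4"
  define b where "b = (last q + 3) mod 4"
  have ab: "a \<noteq> b" unfolding a_def b_def by presburger
  have nbrs: "{w. w < 4 \<and> cyc_adj (last q) w} = {a, b}"
    using u by (auto simp: cyc_adj_iff a_def b_def)
  have ea: "edge_idx (last q) a = last q" and eb: "edge_idx (last q) b = b"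
    using edge_idx_succ[OF u] edge_idx_pred[OF u] by (simp_all add: a_def b_def)
  have step: "errw_step W X0 q v = (if v = a then A / (A + B) else if v = b then B / (A + B) else 0)"
    for v
  proof -
    have adj: "cyc_adj (last q) v \<longleftrightarrow> v = a \<or> v = b"
      using u by (simp add: cyc_adj_iff a_def b_def)
    have "(\<Sum>w\<in>{a,b}. W (ecount X0 q (edge_idx (last q) w))) = A + B"
      using ab ea eb by (simp add: A_def B_def b_def)
    then show ?thesis
      unfolding errw_step_def nbrs adj using ab ea eb by (auto simp: A_def B_def b_def)
  qed
  have "a < 4" "b < 4" by (simp_all add: a_def b_def)
  then have "(\<Sum>v<4. errw_step W X0 q v *\<^sub>R F v)
      = (\<Sum>v\<in>{a,b}. errw_step W X0 q v *\<^sub>R F v)"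
    by (intro sum.mono_neutral_right) (auto simp: step)
  also have "\<dots> = (A / (A + B)) *\<^sub>R F a + (B / (A + B)) *\<^sub>R F b"
    using ab by (simp add: step)
  finally show ?thesis by (simp only: a_def b_def)
qed

lemma errw_step_total:
  assumes "last q < 4" and "\<And>k. W k > 0"
  shows "(\<Sum>v<4. errw_step W X0 q v) = 1"
proof -
  have "W (ecount X0 q (last q)) + W (ecount X0 q ((last q + 3) mod 4)) > 0"
    using assms(2) by (simp add: add_pos_pos)
  then show ?thesis
    using errw_step_average[OF assms(1), where F="\<lambda>_. 1::real"]
    by (simp add: add_divide_distrib[symmetric])
qed

text \<open>The finite set of vertex sequences of length \<open>n + 1\<close> in \<open>G_4\<close>; almost surely
  the first \<open>n + 1\<close> positions of the walk form one of them.\<close>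

definition paths :: "nat \<Rightarrow> nat list set" where
  "paths n = {p. length p = Suc n \<and> set p \<subseteq> {..<4}}"

lemma finite_paths: "finite (paths n)"
proof -
  have "paths n = {xs. set xs \<subseteq> {..<4} \<and> length xs = Suc n}" unfolding paths_def by auto
  then show ?thesis using finite_lists_length_eq[of "{..<4::nat}" "Suc n"] by simp
qed

lemma paths_nonempty: "p \<in> paths n \<Longrightarrow> p \<noteq> []"
  by (auto simp: paths_def)

lemma paths_last: "p \<in> paths n \<Longrightarrow> last p < 4"
  using paths_nonempty[of p n] last_in_set[of p] unfolding paths_def by blast

lemma paths_0: "paths 0 = (\<lambda>v. [v]) ` {..<4}"
  by (auto simp: paths_def length_Suc_conv)

lemma paths_Suc: "paths (Suc n) = (\<lambda>(q,v). q @ [v]) ` (paths n \<times> {..<4})"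
proof (intro set_eqI iffI)
  fix p assume p: "p \<in> paths (Suc n)"
  then have "p \<noteq> []" by (auto simp: paths_def)
  then have "p = butlast p @ [last p]" by simp
  moreover have "butlast p \<in> paths n" using p \<open>p \<noteq> []\<close>
    by (auto simp: paths_def dest: in_set_butlastD)
  moreover have "last p < 4" using p \<open>p \<noteq> []\<close> last_in_set[of p] unfolding paths_def by blast
  ultimately show "p \<in> (\<lambda>(q,v). q @ [v]) ` (paths n \<times> {..<4})"
    by (intro image_eqI[where x="(butlast p, last p)"]) auto
qed (auto simp: paths_def)

lemma sum_paths_Suc: "(\<Sum>p\<in>paths (Suc n). F p) = (\<Sum>q\<in>paths n. \<Sum>v<4. F (q @ [v]))"
proof -
  have inj: "inj_on (\<lambda>(q,v). q @ [v]) (paths n \<times> {..<4})"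
    by (auto simp: inj_on_def)
  show ?thesis
    unfolding paths_Suc sum.reindex[OF inj] by (simp add: sum.cartesian_product case_prod_beta)
qed

lemma path_prob_total:
  assumes "v0 < 4" and "\<And>k. W k > 0"
  shows "(\<Sum>p\<in>paths n. errw_path_prob W X0 v0 p) = 1"
proof (induction n)
  case 0
  have "(\<Sum>p\<in>paths 0. errw_path_prob W X0 v0 p) = (\<Sum>v<4. if v = v0 then 1 else 0)"
    unfolding paths_0 by (subst sum.reindex) (auto simp: inj_on_def errw_path_prob_def)
  then show ?case using assms(1) by simp
next
  case (Suc n)
  have "(\<Sum>p\<in>paths (Suc n). errw_path_prob W X0 v0 p)
      = (\<Sum>q\<in>paths n. errw_path_prob W X0 v0 q * (\<Sum>v<4. errw_step W X0 q v))"
    unfolding sum_paths_Suc sum_distrib_left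
    by (intro sum.cong refl) (simp add: path_prob_snoc paths_nonempty)
  also have "\<dots> = (\<Sum>q\<in>paths n. errw_path_prob W X0 v0 q)"
    by (intro sum.cong refl) (simp add: errw_step_total[OF paths_last assms(2)])
  finally show ?case using Suc.IH by simp
qed


section \<open>A bounded complex martingale\<close>

text \<open>Edges \<open>e_u\<close> and \<open>e_(u-1)\<close> at a vertex \<open>u\<close> have opposite parity, hence opposite
  sign.  Crossing edge \<open>e\<close> while it has weight \<open>k\<close> multiplies the martingale by
  \<open>1 - i \<theta> sign(e) / W(k)\<close>; the opposite signs make the one-step mean equal to 1.\<close>

definition edge_sign :: "nat \<Rightarrow> real" where
  "edge_sign e = (if even e then 1 else -1)"

definition step_factor :: "(nat \<Rightarrow> real) \<Rightarrow> real \<Rightarrow> nat \<Rightarrow> nat \<Rightarrow> complex" where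
  "step_factor W \<theta> e k = 1 - \<i> * complex_of_real (\<theta> * edge_sign e / W k)"

text \<open>The factor contributed by weight level \<open>k\<close> of edge \<open>e\<close>; levels below the initial
  weight are never crossed and contribute 1.\<close>

definition weight_factor :: "(nat \<Rightarrow> real) \<Rightarrow> (nat \<Rightarrow> nat) \<Rightarrow> real \<Rightarrow> nat \<Rightarrow> nat \<Rightarrow> complex" where
  "weight_factor W X0 \<theta> e k = (if X0 e \<le> k then step_factor W \<theta> e k else 1)"

definition edge_product :: "(nat \<Rightarrow> real) \<Rightarrow> (nat \<Rightarrow> nat) \<Rightarrow> real \<Rightarrow> nat \<Rightarrow> nat \<Rightarrow> complex" where
  "edge_product W X0 \<theta> e c = (\<Prod>k<c. weight_factor W X0 \<theta> e k)"

text \<open>The martingale as a function of the current edge weights \<open>c\<close>, and its limit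
  when every edge weight tends to infinity.\<close>

definition mart_value :: "(nat \<Rightarrow> real) \<Rightarrow> (nat \<Rightarrow> nat) \<Rightarrow> real \<Rightarrow> (nat \<Rightarrow> nat) \<Rightarrow> complex" where
  "mart_value W X0 \<theta> c = (\<Prod>e<4. edge_product W X0 \<theta> e (c e))"

definition mart_limit :: "(nat \<Rightarrow> real) \<Rightarrow> (nat \<Rightarrow> nat) \<Rightarrow> real \<Rightarrow> complex" where
  "mart_limit W X0 \<theta> = (\<Prod>e<4. prodinf (weight_factor W X0 \<theta> e))"

lemma mart_value_incr:
  assumes "e < 4"
  shows "mart_value W X0 \<theta> (c(e := Suc (c e))) = mart_value W X0 \<theta> c * weight_factor W X0 \<theta> e (c e)"
proof -
  have "mart_value W X0 \<theta> (c(e := Suc (c e)))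
      = (\<Prod>i<4. edge_product W X0 \<theta> i (c i) * (if i = e then weight_factor W X0 \<theta> e (c e) else 1))"
    unfolding mart_value_def by (intro prod.cong refl) (simp add: edge_product_def)
  then show ?thesis using assms by (simp add: prod.distrib mart_value_def)
qed

lemma ecount_snoc_adj:
  assumes "q \<noteq> []" and "cyc_adj (last q) v"
  defines "e \<equiv> edge_idx (last q) v"
  shows "ecount X0 (q @ [v]) = (ecount X0 q)(e := Suc (ecount X0 q e))"
proof
  fix i
  have "{last q, v} = cyc_edge i \<longleftrightarrow> i = e"
    using adj_edge_idx[OF assms(2)] cyc_edge_inj unfolding e_def by metis
  then show "ecount X0 (q @ [v]) i = ((ecount X0 q)(e := Suc (ecount X0 q e))) i"
    using ecount_snoc[OF assms(1)] by simp
qed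

lemma mart_value_snoc:
  assumes "q \<noteq> []" and "cyc_adj (last q) v"
  defines "e \<equiv> edge_idx (last q) v"
  shows "mart_value W X0 \<theta> (ecount X0 (q @ [v]))
       = mart_value W X0 \<theta> (ecount X0 q) * step_factor W \<theta> e (ecount X0 q e)"
  using mart_value_incr[OF adj_edge_idx(1)[OF assms(2)]] ecount_ge[of X0 e q]
  unfolding ecount_snoc_adj[OF assms(1,2)] e_def by (simp add: weight_factor_def)

lemma step_factor_mean:
  assumes u: "last q < 4" and Wpos: "\<And>k. W k > 0"
  shows "(\<Sum>v<4. errw_step W X0 q v *\<^sub>R
            step_factor W \<theta> (edge_idx (last q) v) (ecount X0 q (edge_idx (last q) v))) = 1"
proof -
  define u where "u = last q"
  define b where "b = (u + 3) mod 4"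
  define A where "A = W (ecount X0 q u)"
  define B where "B = W (ecount X0 q b)"
  have pos: "A > 0" "B > 0" using Wpos by (auto simp: A_def B_def)
  have "even b \<longleftrightarrow> odd u" using u unfolding b_def u_def by presburger
  then have sign_b: "edge_sign b = - edge_sign u" by (simp add: edge_sign_def)
  have "(\<Sum>v<4. errw_step W X0 q v *\<^sub>R
            step_factor W \<theta> (edge_idx (last q) v) (ecount X0 q (edge_idx (last q) v)))
      = (A / (A + B)) *\<^sub>R step_factor W \<theta> u (ecount X0 q u)
        + (B / (A + B)) *\<^sub>R step_factor W \<theta> b (ecount X0 q b)"
    unfolding errw_step_average[OF u] using edge_idx_succ[OF u] edge_idx_pred[OF u]
    by (simp add: A_def B_def b_def u_def)
  also have "\<dots> = (1 / (A + B)) *\<^sub>R (A *\<^sub>R step_factor W \<theta> u (ecount X0 q u)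
                                  + B *\<^sub>R step_factor W \<theta> b (ecount X0 q b))"
    by (simp add: scaleR_add_right)
  also have "A *\<^sub>R step_factor W \<theta> u (ecount X0 q u) = of_real A - \<i> * of_real (\<theta> * edge_sign u)"
    using pos by (simp add: step_factor_def A_def[symmetric] scaleR_conv_of_real field_simps)
  also have "B *\<^sub>R step_factor W \<theta> b (ecount X0 q b) = of_real B + \<i> * of_real (\<theta> * edge_sign u)"
    using pos by (simp add: step_factor_def B_def[symmetric] sign_b scaleR_conv_of_real field_simps)
  also have "(1 / (A + B)) *\<^sub>R (of_real A - \<i> * of_real (\<theta> * edge_sign u)
                                 + (of_real B + \<i> * of_real (\<theta> * edge_sign u))) = (1::complex)"
    using pos by (simp add: scaleR_conv_of_real of_real_add[symmetric] del: of_real_add)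
  finally show ?thesis .
qed

lemma mart_value_paths:
  assumes "m \<le> n" and Wpos: "\<And>k. W k > 0"
  shows "(\<Sum>p\<in>paths n. errw_path_prob W X0 v0 p *\<^sub>R
            (mart_value W X0 \<theta> (ecount X0 p) * g (take (Suc m) p)))
       = (\<Sum>p\<in>paths m. errw_path_prob W X0 v0 p *\<^sub>R (mart_value W X0 \<theta> (ecount X0 p) * g p))"
  using assms(1)
proof (induction n rule: dec_induct)
  case base
  show ?case by (intro sum.cong refl) (simp add: paths_def)
next
  case (step n)
  let ?P = "errw_path_prob W X0 v0" and ?M = "\<lambda>p. mart_value W X0 \<theta> (ecount X0 p)"
  let ?z = "\<lambda>q v. step_factor W \<theta> (edge_idx (last q) v) (ecount X0 q (edge_idx (last q) v))"
  have "?P (q @ [v]) *\<^sub>R (?M (q @ [v]) * g (take (Suc m) (q @ [v])))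
      = (?P q *\<^sub>R (?M q * g (take (Suc m) q))) * (errw_step W X0 q v *\<^sub>R ?z q v)"
    if q: "q \<in> paths n" for q v
  proof -
    have tk: "take (Suc m) (q @ [v]) = take (Suc m) q" using q step.hyps by (simp add: paths_def)
    show ?thesis
    proof (cases "cyc_adj (last q) v")
      case True
      then show ?thesis unfolding tk path_prob_snoc[OF paths_nonempty[OF q]]
          mart_value_snoc[OF paths_nonempty[OF q] True] by (simp add: algebra_simps)
    next
      case False
      then show ?thesis unfolding tk path_prob_snoc[OF paths_nonempty[OF q]]
        by (simp add: errw_step_def)
    qed
  qed
  then have "(\<Sum>p\<in>paths (Suc n). ?P p *\<^sub>R (?M p * g (take (Suc m) p)))
      = (\<Sum>q\<in>paths n. (?P q *\<^sub>R (?M q * g (take (Suc m) q)))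
            * (\<Sum>v<4. errw_step W X0 q v *\<^sub>R ?z q v))"
    unfolding sum_paths_Suc sum_distrib_left by simp
  also have "\<dots> = (\<Sum>q\<in>paths n. ?P q *\<^sub>R (?M q * g (take (Suc m) q)))"
    by (intro sum.cong refl) (simp add: step_factor_mean[OF paths_last Wpos])
  finally show ?case using step.IH by simp
qed


section \<open>Bounds and limits of the martingale\<close>

text \<open>All factors have modulus at least 1 and differ from 1 by at most \<open>|\<theta>| / W(k)\<close>;
  since \<open>1/W\<close> is summable, the products converge and increase in modulus towards the
  limit.  Hence the martingale is bounded by the modulus of its limit.\<close>

lemma norm_step_factor: "norm (step_factor W \<theta> e k) = sqrt (1 + (\<theta> / W k)\<^sup>2)"
  by (simp add: step_factor_def norm_complex_def edge_sign_def power_divide power_mult_distrib)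

lemma norm_weight_factor_ge_1: "norm (weight_factor W X0 \<theta> e k) \<ge> 1"
  by (simp add: weight_factor_def norm_step_factor)

context
  fixes W :: "nat \<Rightarrow> real" and X0 :: "nat \<Rightarrow> nat" and \<theta> :: real
  assumes Wpos: "\<And>k. W k > 0" and summable_W: "summable (\<lambda>k. 1 / W k)"
begin

lemma norm_weight_factor_minus_1: "norm (weight_factor W X0 \<theta> e k - 1) \<le> \<bar>\<theta>\<bar> / W k"
proof -
  have "step_factor W \<theta> e k - 1 = - (\<i> * complex_of_real (\<theta> * edge_sign e / W k))"
    by (simp add: step_factor_def)
  then have "norm (step_factor W \<theta> e k - 1) = \<bar>\<theta> * edge_sign e / W k\<bar>"
    by (simp only: norm_minus_cancel norm_mult norm_ii norm_of_real mult_1)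
  also have "\<dots> = \<bar>\<theta>\<bar> / W k" using Wpos[of k] by (simp add: edge_sign_def abs_mult)
  finally show ?thesis using Wpos[of k] by (simp add: weight_factor_def)
qed

lemma edge_product_tendsto:
  "(\<lambda>c. edge_product W X0 \<theta> e c) \<longlonglongrightarrow> prodinf (weight_factor W X0 \<theta> e)"
proof -
  have "summable (\<lambda>k. \<bar>\<theta>\<bar> / W k)" using summable_mult[OF summable_W, of "\<bar>\<theta>\<bar>"] by simp
  then have "summable (\<lambda>k. norm (weight_factor W X0 \<theta> e k - 1))"
    by (rule summable_comparison_test'[where N=0]) (simp add: norm_weight_factor_minus_1)
  then have "convergent_prod (weight_factor W X0 \<theta> e)"
    by (intro abs_convergent_prod_imp_convergent_prod summable_imp_abs_convergent_prod)
  then have "(\<lambda>n. \<Prod>i\<le>n. weight_factor W X0 \<theta> e i) \<longlonglongrightarrow> prodinf (weight_factor W X0 \<theta> e)"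
    by (rule convergent_prod_LIMSEQ)
  then show ?thesis unfolding edge_product_def by (simp add: LIMSEQ_lessThan_iff_atMost)
qed

text \<open>Since all factors have modulus \<open>\<ge> 1\<close>, the moduli of the partial products increase
  to the modulus of the infinite product.\<close>

lemma norm_edge_product_le: "norm (edge_product W X0 \<theta> e c) \<le> norm (prodinf (weight_factor W X0 \<theta> e))"
proof -
  have "incseq (\<lambda>c. norm (edge_product W X0 \<theta> e c))"
  proof (rule incseq_SucI)
    fix c
    have "norm (edge_product W X0 \<theta> e c) * 1
        \<le> norm (edge_product W X0 \<theta> e c) * norm (weight_factor W X0 \<theta> e c)"
      by (rule mult_left_mono[OF norm_weight_factor_ge_1]) simp
    then show "norm (edge_product W X0 \<theta> e c) \<le> norm (edge_product W X0 \<theta> e (Suc c))"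
      by (simp add: edge_product_def norm_mult)
  qed
  then show ?thesis by (rule incseq_le[OF _ tendsto_norm[OF edge_product_tendsto]])
qed

lemma norm_mart_value_le: "norm (mart_value W X0 \<theta> c) \<le> norm (mart_limit W X0 \<theta>)"
  unfolding mart_value_def mart_limit_def prod_norm[symmetric]
  by (rule prod_mono) (simp add: norm_edge_product_le)

lemma norm_mart_limit_ge_1: "norm (mart_limit W X0 \<theta>) \<ge> 1"
  using norm_mart_value_le[of "\<lambda>_. 0"] by (simp add: mart_value_def edge_product_def)

lemma mart_value_tendsto:
  assumes "\<And>e. e < 4 \<Longrightarrow> filterlim (\<lambda>n. c n e) at_top sequentially"
  shows "(\<lambda>n. mart_value W X0 \<theta> (c n)) \<longlonglongrightarrow> mart_limit W X0 \<theta>"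
  unfolding mart_value_def mart_limit_def
  by (intro tendsto_prod filterlim_compose[OF edge_product_tendsto] assms) simp

text \<open>The key estimate: relative to its limit, the martingale is small when \<open>\<theta>\<close> is large,
  because the next factor of edge \<open>e_0\<close> alone has modulus at least \<open>\<theta> / W(c_0)\<close>.\<close>

lemma mart_value_ratio:
  assumes "\<theta> > 0" and "X0 0 \<le> c 0"
  shows "norm (mart_value W X0 \<theta> c) / norm (mart_limit W X0 \<theta>) \<le> W (c 0) / \<theta>"
proof -
  define G where "G = norm (mart_limit W X0 \<theta>)"
  define z where "z = norm (weight_factor W X0 \<theta> 0 (c 0))"
  have G: "G \<ge> 1" unfolding G_def by (rule norm_mart_limit_ge_1)
  have "z = norm (step_factor W \<theta> 0 (c 0))" using assms(2) by (simp add: z_def weight_factor_def)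
  also have "\<dots> \<ge> sqrt ((\<theta> / W (c 0))\<^sup>2)" unfolding norm_step_factor by (rule real_sqrt_le_mono) simp
  finally have z: "z \<ge> \<theta> / W (c 0)" using assms(1) Wpos[of "c 0"] by simp
  have pos: "\<theta> / W (c 0) > 0" using assms(1) Wpos[of "c 0"] by simp
  have "norm (mart_value W X0 \<theta> c) * z = norm (mart_value W X0 \<theta> (c(0 := Suc (c 0))))"
    by (simp add: z_def mart_value_incr norm_mult)
  also have "\<dots> \<le> G" unfolding G_def by (rule norm_mart_value_le)
  finally have "norm (mart_value W X0 \<theta> c) \<le> G / z" using z pos by (simp add: pos_le_divide_eq)
  also have "\<dots> \<le> G / (\<theta> / W (c 0))"
    using z pos G mult_pos_pos[of z "\<theta> / W (c 0)"] by (intro divide_left_mono) auto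
  also have "\<dots> = W (c 0) / \<theta> * G" by simp
  finally have "norm (mart_value W X0 \<theta> c) \<le> W (c 0) / \<theta> * G" .
  moreover have "G > 0" using G by simp
  ultimately show ?thesis unfolding G_def[symmetric] by (simp add: pos_divide_le_eq)
qed

end


section \<open>Approximating events by events of a generating algebra\<close>

text \<open>In a finite measure
  space every set of the \<open>\<sigma>\<close>-algebra generated by an algebra \<open>G\<close> is approximable by
  \<open>G\<close>; we use this to approximate the event of interest by events that depend on
  finitely many steps of the walk only.\<close>

definition approximable :: "'a measure \<Rightarrow> 'a set set \<Rightarrow> 'a set \<Rightarrow> bool" where
  "approximable M G X \<longleftrightarrow>
     X \<in> sets M \<and> (\<forall>\<epsilon>>0. \<exists>B\<in>G. measure M (sym_diff X B) < \<epsilon>)"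

lemma finite_union_closed:
  fixes N :: nat
  assumes "{} \<in> G" and "\<And>B C. B \<in> G \<Longrightarrow> C \<in> G \<Longrightarrow> B \<union> C \<in> G"
    and "\<And>i. i < N \<Longrightarrow> B i \<in> G"
  shows "(\<Union>i<N. B i) \<in> G"
  using assms(3) by (induction N) (simp_all add: lessThan_Suc assms(1,2))

lemma (in finite_measure) measure_UN_tail:
  assumes "\<And>i::nat. A i \<in> sets M" and "\<epsilon> > 0"
  shows "\<exists>N. measure M ((\<Union>i. A i) - (\<Union>i<N. A i)) < \<epsilon>"
proof -
  have "incseq (\<lambda>N. \<Union>i<N. A i)" by (intro monoI UN_mono) auto
  then have "(\<lambda>N. measure M (\<Union>i<N. A i)) \<longlonglongrightarrow> measure M (\<Union>N. \<Union>i<N. A i)"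
    using assms(1) by (intro finite_Lim_measure_incseq) auto
  moreover have "(\<Union>N. \<Union>i<N. A i) = (\<Union>i. A i)" by auto
  ultimately have "(\<lambda>N. measure M (\<Union>i<N. A i)) \<longlonglongrightarrow> measure M (\<Union>i. A i)"
    by simp
  from order_tendstoD(1)[OF this, of "measure M (\<Union>i. A i) - \<epsilon>"] assms(2)
  obtain N where N: "measure M (\<Union>i. A i) - \<epsilon> < measure M (\<Union>i<N. A i)"
    by (auto simp: eventually_sequentially)
  have "(\<Union>i<N. A i) \<in> sets M" "(\<Union>i<N. A i) \<subseteq> (\<Union>i. A i)" "(\<Union>i. A i) \<in> sets M"
    using assms(1) by auto
  then have "measure M ((\<Union>i. A i) - (\<Union>i<N. A i)) < \<epsilon>"
    using N finite_measure_Diff by simp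
  then show ?thesis ..
qed

text \<open>Approximable sets are closed under countable unions: truncate the union to
  \<open>N\<close> pieces up to \<open>\<epsilon>/2\<close>, then approximate each piece up to \<open>\<epsilon>/(2(N+1))\<close>.\<close>

lemma (in finite_measure) approximable_UN:
  assumes G: "{} \<in> G" "\<And>B C. B \<in> G \<Longrightarrow> C \<in> G \<Longrightarrow> B \<union> C \<in> G" "G \<subseteq> sets M"
    and approx: "\<And>i::nat. approximable M G (A i)"
  shows "approximable M G (\<Union>i. A i)"
proof -
  define U where "U = (\<Union>i. A i)"
  have A_sets: "A i \<in> sets M" for i using approx by (simp add: approximable_def)
  then have U_sets: "U \<in> sets M" by (auto simp: U_def)
  have "\<exists>B\<in>G. measure M (sym_diff U B) < \<epsilon>" if \<epsilon>: "\<epsilon> > 0" for \<epsilon>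
  proof -
    obtain N where tail: "measure M (U - (\<Union>i<N. A i)) < \<epsilon> / 2"
      using measure_UN_tail[of A "\<epsilon> / 2", OF A_sets] \<epsilon> by (auto simp: U_def)
    define \<eta> where "\<eta> = \<epsilon> / (2 * Suc N)"
    have "\<eta> > 0" using \<epsilon> by (simp add: \<eta>_def)
    then have "\<forall>i. \<exists>B. B \<in> G \<and> measure M (sym_diff (A i) B) < \<eta>"
      using approx by (auto simp: approximable_def)
    then obtain B where B: "\<And>i. B i \<in> G" and err: "\<And>i. measure M (sym_diff (A i) (B i)) < \<eta>"
      by metis
    define D where "D i = sym_diff (A i) (B i)" for i
    have D_sets: "D i \<in> sets M" for i using A_sets[of i] subsetD[OF G(3) B[of i]] by (auto simp: D_def)
    have "sym_diff U (\<Union>i<N. B i) \<subseteq> (U - (\<Union>i<N. A i)) \<union> (\<Union>i<N. D i)"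
      by (auto simp: U_def D_def)
    then have "measure M (sym_diff U (\<Union>i<N. B i))
        \<le> measure M ((U - (\<Union>i<N. A i)) \<union> (\<Union>i<N. D i))"
      using U_sets A_sets D_sets by (intro finite_measure_mono) auto
    also have "\<dots> \<le> measure M (U - (\<Union>i<N. A i)) + (\<Sum>i<N. measure M (D i))"
      using U_sets A_sets D_sets
      by (intro order.trans[OF measure_Un_le] add_left_mono finite_measure_subadditive_finite) auto
    also have "(\<Sum>i<N. measure M (D i)) \<le> N * \<eta>"
      using sum_mono[of "{..<N}" "\<lambda>i. measure M (D i)" "\<lambda>_. \<eta>"] err by (simp add: D_def less_imp_le)
    also have "N * \<eta> \<le> \<epsilon> / 2" using \<epsilon> by (simp add: \<eta>_def field_simps)
    finally have "measure M (sym_diff U (\<Union>i<N. B i)) < \<epsilon>"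
      using tail by linarith
    moreover have "(\<Union>i<N. B i) \<in> G" using G(1,2) B by (rule finite_union_closed)
    ultimately show ?thesis by blast
  qed
  then show ?thesis using U_sets by (simp add: approximable_def U_def)
qed

text \<open>The approximable sets contain the generators and are closed under complements
  and countable unions, hence contain the generated \<open>\<sigma>\<close>-algebra.\<close>

theorem (in finite_measure) approximable_sigma_sets:
  assumes G: "{} \<in> G" "\<And>B C. B \<in> G \<Longrightarrow> C \<in> G \<Longrightarrow> B \<union> C \<in> G" "G \<subseteq> sets M"
    and compl: "\<And>B. B \<in> G \<Longrightarrow> space M - B \<in> G"
    and X: "X \<in> sigma_sets (space M) G"
  shows "approximable M G X"
  using X
proof (induction rule: sigma_sets.induct)
  case (Basic X)
  then show ?case using G(3) by (auto simp: approximable_def intro!: bexI[of _ X])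
next
  case Empty
  then show ?case using G(1) by (auto simp: approximable_def intro!: bexI[of _ "{}"])
next
  case (Compl X)
  have "sym_diff (space M - X) (space M - B) = sym_diff X B"
    if "B \<in> G" for B
    using that Compl.IH G(3) sets.sets_into_space by (auto simp: approximable_def)
  then show ?case using Compl.IH compl by (auto simp: approximable_def) metis
next
  case (Union A)
  then show ?case using approximable_UN[OF G] by blast
qed


section \<open>The walk as a stochastic process\<close>

text \<open>The hypotheses of the theorem: \<open>I\<close> is a process on a probability space whose finite
  path probabilities are those of the ERRW.\<close>

locale errw_walk =
  fixes M :: "'a measure" and I :: "nat \<Rightarrow> 'a \<Rightarrow> nat"
    and W :: "nat \<Rightarrow> real" and X0 :: "nat \<Rightarrow> nat" and v0 :: nat
  assumes prob_space: "prob_space M"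
    and Wpos: "\<And>k. W k > 0"
    and summable_W: "summable (\<lambda>k. 1 / W k)"
    and start: "v0 < 4"
    and I_measurable: "\<And>n. I n \<in> measurable M (count_space UNIV)"
    and path_prob: "\<And>p. p \<noteq> [] \<Longrightarrow>
           measure M {\<omega> \<in> space M. \<forall>k<length p. I k \<omega> = p ! k} = errw_path_prob W X0 v0 p"
begin

sublocale prob_space M by (rule prob_space)

definition prefix :: "nat \<Rightarrow> 'a \<Rightarrow> nat list" where
  "prefix n \<omega> = map (\<lambda>k. I k \<omega>) [0..<Suc n]"

lemma length_prefix [simp]: "length (prefix n \<omega>) = Suc n"
  by (simp add: prefix_def)

lemma nth_prefix: "k < Suc n \<Longrightarrow> prefix n \<omega> ! k = I k \<omega>"
  by (simp add: prefix_def nth_map_upt del: upt_Suc)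

lemma take_prefix: "m \<le> n \<Longrightarrow> take (Suc m) (prefix n \<omega>) = prefix m \<omega>"
  by (simp add: prefix_def take_map del: upt_Suc)

lemma prefix_eq_iff: "prefix n \<omega> = p \<longleftrightarrow> length p = Suc n \<and> (\<forall>k<length p. I k \<omega> = p ! k)"
  by (auto simp: list_eq_iff_nth_eq nth_prefix)

lemma prefix_event_sets: "{\<omega> \<in> space M. prefix n \<omega> = p} \<in> sets M"
proof (cases "length p = Suc n")
  case True
  have "{\<omega> \<in> space M. prefix n \<omega> = p}
      = space M - (\<Union>k\<in>{..<Suc n}. space M - I k -` {p ! k} \<inter> space M)"
    using True by (auto simp: prefix_eq_iff)
  also have "\<dots> \<in> sets M"
    using I_measurable by (intro sets.Diff sets.top sets.finite_UN) (auto simp: measurable_def)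
  finally show ?thesis .
next
  case False
  then show ?thesis by (simp add: prefix_eq_iff)
qed

lemma measurable_prefix: "prefix n \<in> measurable M (count_space UNIV)"
  unfolding measurable_count_space_eq2_countable
proof (intro conjI ballI)
  fix p :: "nat list"
  have "prefix n -` {p} \<inter> space M = {\<omega> \<in> space M. prefix n \<omega> = p}" by auto
  then show "prefix n -` {p} \<inter> space M \<in> sets M" using prefix_event_sets by simp
qed auto

lemma prob_prefix_eq:
  assumes "length p = Suc n"
  shows "measure M {\<omega> \<in> space M. prefix n \<omega> = p} = errw_path_prob W X0 v0 p"
proof -
  have "p \<noteq> []" using assms by auto
  then show ?thesis unfolding prefix_eq_iff using assms path_prob[of p] by simp
qed

text \<open>Almost surely the walk stays on the vertices \<open>{0,...,3}\<close>, since the path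
  probabilities of \<open>paths n\<close> already add up to 1.\<close>

lemma AE_prefix_paths: "AE \<omega> in M. prefix n \<omega> \<in> paths n"
proof -
  have "prob {\<omega> \<in> space M. prefix n \<omega> \<in> paths n}
      = prob (\<Union>p\<in>paths n. {\<omega> \<in> space M. prefix n \<omega> = p})"
    by (rule arg_cong[where f=prob]) auto
  also have "\<dots> = (\<Sum>p\<in>paths n. prob {\<omega> \<in> space M. prefix n \<omega> = p})"
    using finite_paths prefix_event_sets
    by (intro finite_measure_finite_Union) (auto simp: disjoint_family_on_def)
  also have "\<dots> = (\<Sum>p\<in>paths n. errw_path_prob W X0 v0 p)"
    by (intro sum.cong refl) (simp add: prob_prefix_eq paths_def)
  also have "\<dots> = 1" by (rule path_prob_total[OF start Wpos])
  finally have "AE \<omega> in M. \<omega> \<in> {\<omega> \<in> space M. prefix n \<omega> \<in> paths n}" by (rule AE_prob_1)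
  then show ?thesis by auto
qed

lemma integral_prefix_event:
  fixes x :: "'b::{banach, second_countable_topology}"
  assumes "p \<in> paths n"
  shows "(\<integral>\<omega>. indicator {\<omega> \<in> space M. prefix n \<omega> = p} \<omega> *\<^sub>R x \<partial>M) = errw_path_prob W X0 v0 p *\<^sub>R x"
proof -
  have "has_bochner_integral M (\<lambda>\<omega>. indicator {\<omega> \<in> space M. prefix n \<omega> = p} \<omega> *\<^sub>R x)
      (errw_path_prob W X0 v0 p *\<^sub>R x)"
    using assms has_bochner_integral_indicator[OF prefix_event_sets, of n p]
    by (simp add: emeasure_eq_measure prob_prefix_eq paths_def)
  then show ?thesis by (rule has_bochner_integral_integral_eq)
qed

lemma integral_prefix:
  fixes F :: "nat list \<Rightarrow> 'b::{banach, second_countable_topology}"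
  shows "(\<integral>\<omega>. F (prefix n \<omega>) \<partial>M) = (\<Sum>p\<in>paths n. errw_path_prob W X0 v0 p *\<^sub>R F p)"
proof -
  let ?E = "\<lambda>p. {\<omega> \<in> space M. prefix n \<omega> = p}"
  have "(\<integral>\<omega>. F (prefix n \<omega>) \<partial>M) = (\<integral>\<omega>. (\<Sum>p\<in>paths n. indicator (?E p) \<omega> *\<^sub>R F p) \<partial>M)"
  proof (rule integral_cong_AE)
    show "(\<lambda>\<omega>. F (prefix n \<omega>)) \<in> borel_measurable M"
      by (rule measurable_compose[OF measurable_prefix]) simp
    show "(\<lambda>\<omega>. \<Sum>p\<in>paths n. indicator (?E p) \<omega> *\<^sub>R F p) \<in> borel_measurable M"
      using prefix_event_sets by (intro borel_measurable_sum borel_measurable_scaleR) auto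
    show "AE \<omega> in M. F (prefix n \<omega>) = (\<Sum>p\<in>paths n. indicator (?E p) \<omega> *\<^sub>R F p)"
      using AE_prefix_paths[of n] AE_space
    proof eventually_elim
      case (elim \<omega>)
      then have "(\<Sum>p\<in>paths n. indicator (?E p) \<omega> *\<^sub>R F p) = (\<Sum>p\<in>paths n. if prefix n \<omega> = p then F p else 0)"
        by (intro sum.cong refl) (auto simp: indicator_def)
      also have "\<dots> = F (prefix n \<omega>)" using elim finite_paths by (simp add: sum.delta)
      finally show ?case by simp
    qed
  qed
  also have "\<dots> = (\<Sum>p\<in>paths n. (\<integral>\<omega>. indicator (?E p) \<omega> *\<^sub>R F p \<partial>M))"
    using prefix_event_sets
    by (intro Bochner_Integration.integral_sum integrable_scaleR_left integrable_real_indicator)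
       (auto simp: emeasure_eq_measure)
  also have "\<dots> = (\<Sum>p\<in>paths n. errw_path_prob W X0 v0 p *\<^sub>R F p)"
    by (intro sum.cong refl integral_prefix_event)
  finally show ?thesis .
qed

definition cylinder :: "nat \<Rightarrow> nat list set \<Rightarrow> 'a set" where
  "cylinder m S = {\<omega> \<in> space M. prefix m \<omega> \<in> S}"

definition cylinders :: "'a set set" where
  "cylinders = {cylinder m S |m S. True}"

lemma cylinder_sets: "cylinder m S \<in> sets M"
proof -
  have "cylinder m S = prefix m -` S \<inter> space M" by (auto simp: cylinder_def)
  then show ?thesis using measurable_sets[OF measurable_prefix] by simp
qed

lemma cylinders_algebra:
  shows "{} \<in> cylinders" and "cylinders \<subseteq> sets M"
    and "B \<in> cylinders \<Longrightarrow> space M - B \<in> cylinders"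
    and "B \<in> cylinders \<Longrightarrow> C \<in> cylinders \<Longrightarrow> B \<union> C \<in> cylinders"
proof -
  have "{} = cylinder 0 {}" by (simp add: cylinder_def)
  then show "{} \<in> cylinders" by (auto simp: cylinders_def)
  show "cylinders \<subseteq> sets M" by (auto simp: cylinders_def cylinder_sets)
  show "space M - B \<in> cylinders" if B: "B \<in> cylinders"
  proof -
    obtain m S where "B = cylinder m S" using B unfolding cylinders_def by blast
    then have "space M - B = cylinder m (- S)" by (auto simp: cylinder_def)
    then show ?thesis unfolding cylinders_def by blast
  qed
  show "B \<union> C \<in> cylinders" if BC: "B \<in> cylinders" "C \<in> cylinders"
  proof -
    obtain m S n T where "B = cylinder m S" "C = cylinder n T"
      using BC unfolding cylinders_def by blast
    then have "B \<union> C = cylinder (max m n) {p. take (Suc m) p \<in> S \<or> take (Suc n) p \<in> T}"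
      by (auto simp: cylinder_def take_prefix)
    then show ?thesis unfolding cylinders_def by blast
  qed
qed

definition mart :: "real \<Rightarrow> nat \<Rightarrow> 'a \<Rightarrow> complex" where
  "mart \<theta> n \<omega> = mart_value W X0 \<theta> (ecount X0 (prefix n \<omega>))"

lemma mart_measurable: "mart \<theta> n \<in> borel_measurable M"
  unfolding mart_def by (rule measurable_compose[OF measurable_prefix]) simp

lemma norm_mart_le: "norm (mart \<theta> n \<omega>) \<le> norm (mart_limit W X0 \<theta>)"
  unfolding mart_def by (rule norm_mart_value_le[OF Wpos summable_W])

lemma norm_indicator_mart_le: "norm ((indicator A \<omega> :: complex) * mart \<theta> n \<omega>) \<le> norm (mart_limit W X0 \<theta>)"
  using norm_mart_le[of \<theta> n \<omega>] norm_ge_zero[of "mart_limit W X0 \<theta>"]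
  by (cases "\<omega> \<in> A") simp_all

lemma integrable_indicator_mart:
  assumes "A \<in> sets M"
  shows "integrable M (\<lambda>\<omega>. (indicator A \<omega> :: complex) * mart \<theta> n \<omega>)"
proof (rule integrable_const_bound[where B="norm (mart_limit W X0 \<theta>)"])
  show "AE \<omega> in M. norm ((indicator A \<omega> :: complex) * mart \<theta> n \<omega>) \<le> norm (mart_limit W X0 \<theta>)"
    by (simp add: norm_indicator_mart_le)
  show "(\<lambda>\<omega>. (indicator A \<omega> :: complex) * mart \<theta> n \<omega>) \<in> borel_measurable M"
    using assms by (intro borel_measurable_times borel_measurable_indicator mart_measurable)
qed

lemma mart_cylinder_integral:
  assumes "m \<le> n"
  shows "(\<integral>\<omega>. indicator (cylinder m S) \<omega> * mart \<theta> n \<omega> \<partial>M)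
       = (\<integral>\<omega>. indicator (cylinder m S) \<omega> * mart \<theta> m \<omega> \<partial>M)"
proof -
  define g :: "nat list \<Rightarrow> complex" where "g p = (if p \<in> S then 1 else 0)" for p
  have "(\<integral>\<omega>. indicator (cylinder m S) \<omega> * mart \<theta> n \<omega> \<partial>M)
      = (\<integral>\<omega>. (\<lambda>p. mart_value W X0 \<theta> (ecount X0 p) * g (take (Suc m) p)) (prefix n \<omega>) \<partial>M)"
    by (rule Bochner_Integration.integral_cong)
       (simp_all add: take_prefix[OF assms] g_def cylinder_def indicator_def mart_def)
  also have "\<dots> = (\<Sum>p\<in>paths n. errw_path_prob W X0 v0 p *\<^sub>R
                      (mart_value W X0 \<theta> (ecount X0 p) * g (take (Suc m) p)))"
    by (rule integral_prefix)
  also have "\<dots> = (\<Sum>p\<in>paths m. errw_path_prob W X0 v0 p *\<^sub>R (mart_value W X0 \<theta> (ecount X0 p) * g p))"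
    by (rule mart_value_paths[OF assms Wpos])
  also have "\<dots> = (\<integral>\<omega>. (\<lambda>p. mart_value W X0 \<theta> (ecount X0 p) * g p) (prefix m \<omega>) \<partial>M)"
    by (rule integral_prefix[symmetric])
  also have "\<dots> = (\<integral>\<omega>. indicator (cylinder m S) \<omega> * mart \<theta> m \<omega> \<partial>M)"
    by (rule Bochner_Integration.integral_cong)
       (simp_all add: g_def cylinder_def indicator_def mart_def)
  finally show ?thesis .
qed

end


section \<open>The event that every edge is crossed infinitely often\<close>

lemma card_below_tendsto:
  fixes T :: "nat set"
  assumes "infinite T"
  shows "filterlim (\<lambda>n. card {k. k < n \<and> k \<in> T}) at_top sequentially"
  unfolding filterlim_at_top eventually_sequentially
proof
  fix Z :: nat
  obtain F where F: "finite F" "card F = Z" "F \<subseteq> T"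
    using infinite_arbitrarily_large[OF assms] by blast
  have "Z \<le> card {k. k < n \<and> k \<in> T}" if n: "n \<ge> Suc (\<Sum>F)" for n
  proof -
    have "F \<subseteq> {k. k < n \<and> k \<in> T}"
    proof
      fix k assume "k \<in> F"
      then have "k \<le> \<Sum>F" using F(1) member_le_sum[of k F "\<lambda>x. x"] by simp
      then show "k \<in> {k. k < n \<and> k \<in> T}" using n F(3) \<open>k \<in> F\<close> by auto
    qed
    then have "card F \<le> card {k. k < n \<and> k \<in> T}" by (rule card_mono[rotated]) auto
    then show ?thesis using F(2) by simp
  qed
  then show "\<exists>N. \<forall>n\<ge>N. Z \<le> card {k. k < n \<and> k \<in> T}" by blast
qed

lemma infinite_nat_iff_shifted: "infinite {n::nat. P n} \<longleftrightarrow> (\<forall>N. \<exists>k. P (N + k))"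
  unfolding infinite_nat_iff_unbounded_le
proof (intro iffI allI)
  fix N assume "\<forall>m. \<exists>n\<ge>m. n \<in> {n. P n}"
  then obtain n where "n \<ge> N" "P n" by auto
  then show "\<exists>k. P (N + k)" by (intro exI[of _ "n - N"]) simp
next
  fix m assume "\<forall>N. \<exists>k. P (N + k)"
  then obtain k where "P (m + k)" by auto
  then show "\<exists>n\<ge>m. n \<in> {n. P n}" by (intro exI[of _ "m + k"]) simp
qed

context errw_walk
begin

definition recurrent :: "'a set" where
  "recurrent = {\<omega> \<in> space M. \<forall>i<4. infinite {n. {I n \<omega>, I (Suc n) \<omega>} = cyc_edge i}}"

definition crossing :: "nat \<Rightarrow> nat \<Rightarrow> 'a set" where
  "crossing i n = cylinder (Suc n) {p. {p ! n, p ! Suc n} = cyc_edge i}"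

lemma crossing_iff: "\<omega> \<in> crossing i n \<longleftrightarrow> \<omega> \<in> space M \<and> {I n \<omega>, I (Suc n) \<omega>} = cyc_edge i"
  by (simp add: crossing_def cylinder_def nth_prefix)

lemma recurrent_eq: "recurrent = (\<Inter>i\<in>{..<4}. \<Inter>N. \<Union>n. crossing i (N + n))"
proof (intro set_eqI iffI)
  fix \<omega> assume "\<omega> \<in> recurrent"
  then have sp: "\<omega> \<in> space M"
    and inf: "\<And>i. i < 4 \<Longrightarrow> \<forall>N. \<exists>k. {I (N + k) \<omega>, I (Suc (N + k)) \<omega>} = cyc_edge i"
    unfolding recurrent_def infinite_nat_iff_shifted by auto
  show "\<omega> \<in> (\<Inter>i\<in>{..<4}. \<Inter>N. \<Union>n. crossing i (N + n))"
  proof (intro INT_I)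
    fix i N assume "i \<in> {..<4::nat}"
    then obtain k where "{I (N + k) \<omega>, I (Suc (N + k)) \<omega>} = cyc_edge i" using inf by blast
    then have "\<omega> \<in> crossing i (N + k)" using sp by (simp only: crossing_iff)
    then show "\<omega> \<in> (\<Union>n. crossing i (N + n))" by blast
  qed
next
  fix \<omega> assume \<omega>: "\<omega> \<in> (\<Inter>i\<in>{..<4}. \<Inter>N. \<Union>n. crossing i (N + n))"
  then have cross: "\<forall>N. \<exists>k. \<omega> \<in> crossing i (N + k)" if "i < 4" for i
    using that by blast
  have sp: "\<omega> \<in> space M" using cross[of 0] by (auto simp: crossing_iff)
  have "infinite {n. {I n \<omega>, I (Suc n) \<omega>} = cyc_edge i}" if "i < 4" for i
    unfolding infinite_nat_iff_shifted using cross[OF that] by (simp add: crossing_iff)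
  then show "\<omega> \<in> recurrent" using sp by (simp add: recurrent_def)
qed

lemma recurrent_approximable: "approximable M cylinders recurrent"
proof (rule approximable_sigma_sets)
  have basic: "crossing i n \<in> sigma_sets (space M) cylinders" for i n
    by (rule sigma_sets.Basic) (auto simp: cylinders_def crossing_def)
  then show "recurrent \<in> sigma_sets (space M) cylinders"
  proof -
    have sub: "cylinders \<subseteq> Pow (space M)" using cylinders_algebra(2) sets.sets_into_space by blast
    have "(0::nat) \<in> {..<4}" by simp
    then have "{..<4::nat} \<noteq> {}" by blast
    then show ?thesis unfolding recurrent_eq
      by (intro sigma_sets_INTER[OF sub] sigma_sets_Inter[OF sub] sigma_sets.Union basic)
  qed
qed (use cylinders_algebra in auto)

lemma ecount_prefix:
  "ecount X0 (prefix n \<omega>) e = X0 e + card {k. k < n \<and> k \<in> {k. {I k \<omega>, I (Suc k) \<omega>} = cyc_edge e}}"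
proof -
  have "{k. Suc k < length (prefix n \<omega>) \<and> {prefix n \<omega> ! k, prefix n \<omega> ! Suc k} = cyc_edge e}
      = {k. k < n \<and> {I k \<omega>, I (Suc k) \<omega>} = cyc_edge e}"
  proof (intro Collect_cong)
    fix k
    show "(Suc k < length (prefix n \<omega>) \<and> {prefix n \<omega> ! k, prefix n \<omega> ! Suc k} = cyc_edge e)
        \<longleftrightarrow> (k < n \<and> {I k \<omega>, I (Suc k) \<omega>} = cyc_edge e)"
      by (cases "k < n") (simp_all add: nth_prefix)
  qed
  then show ?thesis by (simp add: ecount_def)
qed

text \<open>On the event, all edge weights tend to infinity, so the martingale converges to
  its limit value.\<close>

lemma mart_tendsto_recurrent:
  assumes "\<omega> \<in> recurrent"
  shows "(\<lambda>n. mart \<theta> n \<omega>) \<longlonglongrightarrow> mart_limit W X0 \<theta>"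
  unfolding mart_def
proof (rule mart_value_tendsto[OF Wpos summable_W])
  fix e :: nat assume "e < 4"
  then have "infinite {k. {I k \<omega>, I (Suc k) \<omega>} = cyc_edge e}"
    using assms by (simp add: recurrent_def)
  from card_below_tendsto[OF this] show "filterlim (\<lambda>n. ecount X0 (prefix n \<omega>) e) at_top sequentially"
    unfolding ecount_prefix by (rule filterlim_at_top_mono) auto
qed

end


section \<open>The event has probability zero\<close>

context errw_walk
begin

lemma integral_indicator_mart_diff:
  assumes A: "A \<in> sets M" and B: "B \<in> sets M"
  shows "norm ((\<integral>\<omega>. indicator A \<omega> * mart \<theta> k \<omega> \<partial>M) - (\<integral>\<omega>. indicator B \<omega> * mart \<theta> k \<omega> \<partial>M))
         \<le> norm (mart_limit W X0 \<theta>) * measure M (sym_diff A B)"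
proof -
  let ?f = "\<lambda>\<omega>. (indicator A \<omega> - indicator B \<omega>) * mart \<theta> k \<omega> :: complex"
  have D: "sym_diff A B \<in> sets M" using A B by auto
  have "(\<integral>\<omega>. indicator A \<omega> * mart \<theta> k \<omega> \<partial>M) - (\<integral>\<omega>. indicator B \<omega> * mart \<theta> k \<omega> \<partial>M)
      = (\<integral>\<omega>. ?f \<omega> \<partial>M)"
    using A B by (simp add: integrable_indicator_mart left_diff_distrib)
  also have "norm \<dots> \<le> (\<integral>\<omega>. norm (?f \<omega>) \<partial>M)" by (rule integral_norm_bound)
  also have "\<dots> \<le> (\<integral>\<omega>. indicator (sym_diff A B) \<omega> * norm (mart_limit W X0 \<theta>) \<partial>M)"
  proof (rule integral_mono)
    show "integrable M (\<lambda>\<omega>. norm (?f \<omega>))"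
      using A B by (simp add: left_diff_distrib integrable_indicator_mart)
    show "integrable M (\<lambda>\<omega>. indicator (sym_diff A B) \<omega> * norm (mart_limit W X0 \<theta>))"
      using D by (intro integrable_mult_left integrable_real_indicator) (auto simp: emeasure_eq_measure)
    fix \<omega>
    have "norm (?f \<omega>) = indicator (sym_diff A B) \<omega> * norm (mart \<theta> k \<omega>)"
      by (cases "\<omega> \<in> A"; cases "\<omega> \<in> B") (simp_all add: norm_mult)
    then show "norm (?f \<omega>) \<le> indicator (sym_diff A B) \<omega> * norm (mart_limit W X0 \<theta>)"
      by (simp add: mult_left_mono norm_mart_le)
  qed
  also have "\<dots> = norm (mart_limit W X0 \<theta>) * measure M (sym_diff A B)"
    using D sets.sets_into_space[OF D] by (simp add: Int_absorb2)
  finally show ?thesis .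
qed

lemma integral_recurrent_mart_tendsto:
  "(\<lambda>n. \<integral>\<omega>. indicator recurrent \<omega> * mart \<theta> n \<omega> \<partial>M)
     \<longlonglongrightarrow> complex_of_real (prob recurrent) * mart_limit W X0 \<theta>"
proof -
  have R: "recurrent \<in> sets M" using recurrent_approximable by (simp add: approximable_def)
  have "(\<lambda>n. \<integral>\<omega>. indicator recurrent \<omega> * mart \<theta> n \<omega> \<partial>M)
     \<longlonglongrightarrow> (\<integral>\<omega>. indicator recurrent \<omega> * mart_limit W X0 \<theta> \<partial>M)"
  proof (rule integral_dominated_convergence[where w="\<lambda>_. norm (mart_limit W X0 \<theta>)"])
    show "AE \<omega> in M. (\<lambda>n. indicator recurrent \<omega> * mart \<theta> n \<omega>)
            \<longlonglongrightarrow> (indicator recurrent \<omega> :: complex) * mart_limit W X0 \<theta>"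
      by (intro AE_I2) (simp add: indicator_def mart_tendsto_recurrent)
    show "AE \<omega> in M. norm ((indicator recurrent \<omega> :: complex) * mart \<theta> n \<omega>)
            \<le> norm (mart_limit W X0 \<theta>)" for n
      by (simp add: norm_indicator_mart_le)
  qed (use R in \<open>auto intro!: borel_measurable_times borel_measurable_indicator mart_measurable\<close>)
  also have "(\<integral>\<omega>. indicator recurrent \<omega> * mart_limit W X0 \<theta> \<partial>M)
      = (\<integral>\<omega>. indicator recurrent \<omega> \<partial>M) * mart_limit W X0 \<theta>"
    by (rule integral_mult_left_zero)
  also have "(\<integral>\<omega>. indicator recurrent \<omega> \<partial>M) = complex_of_real (prob recurrent)"
  proof -
    have "(\<lambda>\<omega>. indicator recurrent \<omega> :: complex) = (\<lambda>\<omega>. complex_of_real (indicator recurrent \<omega>))"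
      by (auto simp: indicator_def)
    then show ?thesis using R sets.sets_into_space[OF R] by (simp add: Int_absorb2)
  qed
  finally show ?thesis .
qed

text \<open>Let \<open>B\<close> be a cylinder determined by
  time \<open>m\<close> and \<open>\<delta>\<close> the measure of its symmetric difference with the event \<open>R\<close>.  On \<open>B\<close>
  the martingale has constant mean from time \<open>m\<close> on, and the means over \<open>R\<close> and \<open>B\<close>
  differ by at most \<open>G \<delta>\<close>, \<open>G = |mart_limit|\<close>; passing to the limit, the mean over \<open>R\<close> at
  time \<open>m\<close> is within \<open>2 G \<delta>\<close> of \<open>P(R) mart_limit\<close>.\<close>

lemma mart_limit_close_to_time:
  fixes m :: nat and S :: "nat list set" and \<theta> :: real
  defines "L \<equiv> \<lambda>A n. (\<integral>\<omega>. indicator A \<omega> * mart \<theta> n \<omega> \<partial>M)"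
    and "G \<equiv> norm (mart_limit W X0 \<theta>)" and "\<delta> \<equiv> measure M (sym_diff recurrent (cylinder m S))"
  shows "norm (complex_of_real (prob recurrent) * mart_limit W X0 \<theta> - L recurrent m) \<le> 2 * G * \<delta>"
proof -
  let ?R = recurrent and ?B = "cylinder m S"
  have R: "?R \<in> sets M" using recurrent_approximable by (simp add: approximable_def)
  have close: "norm (L ?R n - L ?B n) \<le> G * \<delta>" "norm (L ?B n - L ?R n) \<le> G * \<delta>" for n
    using integral_indicator_mart_diff[OF R cylinder_sets, of \<theta> n m S]
      integral_indicator_mart_diff[OF cylinder_sets R, of m S \<theta> n]
    by (simp_all add: L_def G_def \<delta>_def Un_commute)
  have "\<forall>\<^sub>F n in sequentially. norm (L ?R n - L ?R m) \<le> 2 * G * \<delta>"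
    unfolding eventually_sequentially
  proof (intro exI allI impI)
    fix n assume "m \<le> n"
    then have "L ?B n = L ?B m" unfolding L_def by (rule mart_cylinder_integral)
    then have "L ?R n - L ?R m = (L ?R n - L ?B n) + (L ?B m - L ?R m)" by simp
    then show "norm (L ?R n - L ?R m) \<le> 2 * G * \<delta>"
      using norm_triangle_ineq[of "L ?R n - L ?B n" "L ?B m - L ?R m"] close[of n] close[of m]
      by simp
  qed
  moreover have "(\<lambda>n. norm (L ?R n - L ?R m))
      \<longlonglongrightarrow> norm (complex_of_real (prob ?R) * mart_limit W X0 \<theta> - L ?R m)"
    unfolding L_def by (intro tendsto_norm tendsto_diff integral_recurrent_mart_tendsto tendsto_const)
  ultimately show ?thesis
    using tendsto_upperbound trivial_limit_sequentially by blast
qed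

lemma prob_recurrent_le_integral:
  "prob recurrent \<le> (\<integral>\<omega>. indicator recurrent \<omega> *
      (norm (mart \<theta> m \<omega>) / norm (mart_limit W X0 \<theta>)) \<partial>M)
      + 2 * measure M (sym_diff recurrent (cylinder m S))"
proof -
  define G where "G = norm (mart_limit W X0 \<theta>)"
  define L where "L = (\<integral>\<omega>. indicator recurrent \<omega> * mart \<theta> m \<omega> \<partial>M)"
  define J where "J = (\<integral>\<omega>. indicator recurrent \<omega> * (norm (mart \<theta> m \<omega>) / G) \<partial>M)"
  let ?P = "prob recurrent" and ?\<delta> = "measure M (sym_diff recurrent (cylinder m S))"
  have G: "G \<ge> 1" unfolding G_def by (rule norm_mart_limit_ge_1[OF Wpos summable_W])
  have "norm L \<le> (\<integral>\<omega>. norm (indicator recurrent \<omega> * mart \<theta> m \<omega>) \<partial>M)"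
    unfolding L_def by (rule integral_norm_bound)
  also have "\<dots> = (\<integral>\<omega>. indicator recurrent \<omega> * (norm (mart \<theta> m \<omega>) / G) * G \<partial>M)"
    using G by (intro Bochner_Integration.integral_cong) (auto simp: indicator_def)
  also have "\<dots> = J * G" unfolding J_def by (rule integral_mult_left_zero)
  finally have "norm L \<le> J * G" .
  moreover have "norm (complex_of_real ?P * mart_limit W X0 \<theta>) = G * ?P"
    by (simp add: norm_mult G_def)
  moreover have "norm (complex_of_real ?P * mart_limit W X0 \<theta> - L) \<le> 2 * G * ?\<delta>"
    unfolding L_def G_def by (rule mart_limit_close_to_time)
  ultimately have "G * ?P \<le> G * (J + 2 * ?\<delta>)"
    using norm_triangle_sub[of "complex_of_real ?P * mart_limit W X0 \<theta>" L]
    by (simp add: algebra_simps)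
  moreover have "G > 0" using G by simp
  ultimately have "?P \<le> J + 2 * ?\<delta>" by (simp add: mult_le_cancel_left_pos)
  then show ?thesis unfolding J_def G_def .
qed

text \<open>Letting \<open>\<theta> \<rightarrow> \<infinity>\<close> kills the integral: the integrand lies in \<open>[0, 1]\<close> and is at most
  \<open>W(c_0) / \<theta>\<close> pointwise, where \<open>c_0\<close> is the weight of \<open>e_0\<close> at time \<open>m\<close>.\<close>

lemma integral_mart_ratio_tendsto_0:
  fixes m :: nat
  assumes A: "A \<in> sets M"
  defines "h \<equiv> \<lambda>j \<omega>. indicator A \<omega> * (norm (mart (real j) m \<omega>) / norm (mart_limit W X0 (real j)))"
  shows "(\<lambda>j. \<integral>\<omega>. h j \<omega> \<partial>M) \<longlonglongrightarrow> 0"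
proof -
  have h_bounds: "0 \<le> h j \<omega>" "h j \<omega> \<le> 1" for j \<omega>
    using norm_mart_le[of "real j" m \<omega>] norm_mart_limit_ge_1[OF Wpos summable_W, of X0 "real j"]
    by (auto simp: h_def indicator_def divide_le_eq_1)
  have "(\<lambda>j. \<integral>\<omega>. h j \<omega> \<partial>M) \<longlonglongrightarrow> (\<integral>\<omega>. 0 \<partial>M)"
  proof (rule integral_dominated_convergence[where w="\<lambda>_. 1"])
    show "h j \<in> borel_measurable M" for j
      unfolding h_def using A
      by (intro borel_measurable_times borel_measurable_indicator borel_measurable_divide
                measurable_compose[OF mart_measurable borel_measurable_norm] borel_measurable_const)
    show "AE \<omega> in M. (\<lambda>j. h j \<omega>) \<longlonglongrightarrow> 0"
    proof (rule AE_I2)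
      fix \<omega>
      let ?c = "ecount X0 (prefix m \<omega>)"
      have "h j \<omega> \<le> W (?c 0) / real j" if "j > 0" for j
      proof -
        have "h j \<omega> \<le> norm (mart (real j) m \<omega>) / norm (mart_limit W X0 (real j))"
          using h_bounds[of j \<omega>] by (auto simp: h_def indicator_def)
        also have "\<dots> \<le> W (?c 0) / real j"
          unfolding mart_def using that
          by (intro mart_value_ratio[OF Wpos summable_W]) (auto simp: ecount_ge)
        finally show ?thesis .
      qed
      then have upper: "\<forall>\<^sub>F j in sequentially. h j \<omega> \<le> W (?c 0) / real j"
        unfolding eventually_sequentially by (intro exI[of _ 1]) auto
      have lower: "\<forall>\<^sub>F j in sequentially. 0 \<le> h j \<omega>" using h_bounds by simp
      show "(\<lambda>j. h j \<omega>) \<longlonglongrightarrow> 0"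
        by (rule tendsto_sandwich[OF lower upper tendsto_const lim_const_over_n])
    qed
    show "AE \<omega> in M. norm (h j \<omega>) \<le> 1" for j
      using h_bounds by simp
  qed simp_all
  then show ?thesis by simp
qed

lemma prob_recurrent_le_sym_diff:
  "prob recurrent \<le> 2 * measure M (sym_diff recurrent (cylinder m S))"
proof -
  let ?\<delta> = "measure M (sym_diff recurrent (cylinder m S))"
  define J where "J j = (\<integral>\<omega>. indicator recurrent \<omega> *
      (norm (mart (real j) m \<omega>) / norm (mart_limit W X0 (real j))) \<partial>M)" for j
  have "recurrent \<in> sets M" using recurrent_approximable by (simp add: approximable_def)
  then have "(\<lambda>j. J j + 2 * ?\<delta>) \<longlonglongrightarrow> 0 + 2 * ?\<delta>"
    unfolding J_def by (intro tendsto_add tendsto_const integral_mart_ratio_tendsto_0)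
  moreover have "prob recurrent \<le> J j + 2 * ?\<delta>" for j
    unfolding J_def by (rule prob_recurrent_le_integral)
  ultimately show ?thesis
    using tendsto_lowerbound[of _ _ sequentially "prob recurrent"] by simp
qed

theorem prob_recurrent: "prob recurrent = 0"
proof -
  have "prob recurrent \<le> 2 * \<epsilon>" if "\<epsilon> > 0" for \<epsilon>
  proof -
    obtain B where "B \<in> cylinders" and B: "measure M (sym_diff recurrent B) < \<epsilon>"
      using recurrent_approximable \<open>\<epsilon> > 0\<close> unfolding approximable_def by blast
    then obtain m S where "B = cylinder m S" unfolding cylinders_def by blast
    then show ?thesis using prob_recurrent_le_sym_diff[of m S] B by simp
  qed
  then have "prob recurrent \<le> 0 + \<epsilon>" if "\<epsilon> > 0" for \<epsilon>
    using that by (metis half_gt_zero mult_2 add_0 field_sum_of_halves)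
  then have "prob recurrent \<le> 0" by (rule field_le_epsilon)
  then show ?thesis using measure_nonneg[of M recurrent] by linarith
qed

end

theorem proposition3:
  fixes M :: "'a measure" and I :: "nat \<Rightarrow> 'a \<Rightarrow> nat"
    and W :: "nat \<Rightarrow> real" and X0 :: "nat \<Rightarrow> nat" and v0 :: nat
  assumes "prob_space M"
    and "\<And>k. W k > 0"
    and "summable (\<lambda>k. 1 / W k)"
    and "v0 < 4"
    and "\<And>n. I n \<in> measurable M (count_space UNIV)"
    and "\<And>p. p \<noteq> [] \<Longrightarrow>
           measure M {\<omega> \<in> space M. \<forall>k<length p. I k \<omega> = p ! k} = errw_path_prob W X0 v0 p"
  shows "measure M {\<omega> \<in> space M. \<forall>i<4. infinite {n. {I n \<omega>, I (Suc n) \<omega>} = cyc_edge i}} = 0"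
proof -
  interpret errw_walk M I W X0 v0
    by (rule errw_walk.intro[OF assms])
  show ?thesis using prob_recurrent unfolding recurrent_def .
qed

end
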